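(* In $TTR$, if $A$ is an arrow type and $A\subseteq B$, then $B$ is an arrow type.
   Context: $TTR$ types: over a second-order language with first-order variables, function symbols, $n$-ary predicate variables and symbols, and a fixed system $\mathbf E$ of equations; atomic $\perp$ and $X(t_1,\dots,t_n)$; constructors $\to$, $\forall x$, $\forall X$, and $\mu Cx_1\dots x_nA\langle t_1,\dots,t_n\rangle$ for $C$ an $n$-ary predicate symbol occurring and positive in $A$. Subtyping $\subseteq$ is the least relation closed under: $A\subseteq A$; from $A\subseteq A'$, $B\subseteq B'$ infer $A'\to B\subseteq A\to B'$; from $A[G/v]\subseteq B$ infer $\forall vA\subseteq B$ ($G$ a term or formula as appropriate); from $A\subseteq B$ infer $A\subseteq\forall vB$ if $v$ not free in $A$; from $A\subseteq B[v/y]$ infer $A\subseteq B[w/y]$ if $v=w$ is an instance of an equation of $\mathbf E$; transitivity; $D[\mu C\bar xD\langle\bar z\rangle/C(\bar z)][\bar t/\bar x]\subseteq\mu C\bar xD\langle\bar t\rangle$ and its converse; from $D[E/C(\bar x)]\subseteq E$ infer $\mu C\bar xD\langle\bar t\rangle\subseteq E[\bar t/\bar x]$. An arrow type is a type containing at least one arrow $\to$. *)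

theory Defs
  imports Main
begin

text \<open>Syntax of TTR types, with de Bruijn indices for bound (and free) first-order
variables and for predicate variables.  Predicate binders are \<forall>X and the \<mu>-binder
(which binds the predicate symbol C); both use the same index space.
Free predicate symbols (constants) are named.\<close>

datatype trm = Var nat | Fn nat "trm list"

datatype ty =
    Bot
  | PVar nat "trm list"
  | PSym nat "trm list"
  | Arr ty ty
  | AllT ty
  | AllP ty
  | Mu nat ty "trm list"       \<comment> \<open>Mu n D ts = \<mu> C x1..xn D <t1..tn>; in D, C is predicate
                                    index 0 and x1..xn are first-order indices 0..n-1\<close>

fun tsubst :: "(nat \<Rightarrow> trm) \<Rightarrow> trm \<Rightarrow> trm" where
  "tsubst \<sigma> (Var i) = \<sigma> i"
| "tsubst \<sigma> (Fn f ts) = Fn f (map (tsubst \<sigma>) ts)"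

definition liftn :: "nat \<Rightarrow> (nat \<Rightarrow> trm) \<Rightarrow> nat \<Rightarrow> trm" where
  "liftn n \<sigma> = (\<lambda>i. if i < n then Var i else tsubst (\<lambda>j. Var (j + n)) (\<sigma> (i - n)))"

primrec fsubst :: "(nat \<Rightarrow> trm) \<Rightarrow> ty \<Rightarrow> ty" where
  "fsubst \<sigma> Bot = Bot"
| "fsubst \<sigma> (PVar X ts) = PVar X (map (tsubst \<sigma>) ts)"
| "fsubst \<sigma> (PSym c ts) = PSym c (map (tsubst \<sigma>) ts)"
| "fsubst \<sigma> (Arr A B) = Arr (fsubst \<sigma> A) (fsubst \<sigma> B)"
| "fsubst \<sigma> (AllT A) = AllT (fsubst (liftn 1 \<sigma>) A)"
| "fsubst \<sigma> (AllP A) = AllP (fsubst \<sigma> A)"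
| "fsubst \<sigma> (Mu n D ts) = Mu n (fsubst (liftn n \<sigma>) D) (map (tsubst \<sigma>) ts)"

definition plift :: "(nat \<Rightarrow> nat) \<Rightarrow> nat \<Rightarrow> nat" where
  "plift f = (\<lambda>i. case i of 0 \<Rightarrow> 0 | Suc j \<Rightarrow> Suc (f j))"

primrec prename :: "(nat \<Rightarrow> nat) \<Rightarrow> ty \<Rightarrow> ty" where
  "prename f Bot = Bot"
| "prename f (PVar X ts) = PVar (f X) ts"
| "prename f (PSym c ts) = PSym c ts"
| "prename f (Arr A B) = Arr (prename f A) (prename f B)"
| "prename f (AllT A) = AllT (prename f A)"
| "prename f (AllP A) = AllP (prename (plift f) A)"
| "prename f (Mu n D ts) = Mu n (prename (plift f) D) ts"

text \<open>Substitution of abstractions for predicate variables.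
  \<rho> X = Inl j : the variable X is renamed to j;
  \<rho> X = Inr G : X is replaced by the abstraction \<lambda>y1..ym. G, where in G the
  first-order indices 0..m-1 are the parameters y1..ym (m the arity of the
  occurrence) and indices \<ge> m refer to the surrounding context.
  k = number of first-order binders passed, d = number of predicate binders passed.\<close>

primrec psubst :: "(nat \<Rightarrow> nat + ty) \<Rightarrow> nat \<Rightarrow> nat \<Rightarrow> ty \<Rightarrow> ty" where
  "psubst \<rho> k d Bot = Bot"
| "psubst \<rho> k d (PVar X ts) =
     (if X < d then PVar X ts
      else (case \<rho> (X - d) of
              Inl j \<Rightarrow> PVar (j + d) ts
            | Inr G \<Rightarrow> fsubst (\<lambda>j. if j < length ts then ts ! j else Var (j - length ts + k))
                               (prename (\<lambda>i. i + d) G)))"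
| "psubst \<rho> k d (PSym c ts) = PSym c ts"
| "psubst \<rho> k d (Arr A B) = Arr (psubst \<rho> k d A) (psubst \<rho> k d B)"
| "psubst \<rho> k d (AllT A) = AllT (psubst \<rho> (Suc k) d A)"
| "psubst \<rho> k d (AllP A) = AllP (psubst \<rho> k (Suc d) A)"
| "psubst \<rho> k d (Mu n D ts) = Mu n (psubst \<rho> (k + n) (Suc d) D) ts"

definition inst_t :: "trm \<Rightarrow> ty \<Rightarrow> ty" where
  "inst_t t A = fsubst (\<lambda>j. case j of 0 \<Rightarrow> t | Suc i \<Rightarrow> Var i) A"

definition inst_p :: "ty \<Rightarrow> ty \<Rightarrow> ty" where
  "inst_p G A = psubst (\<lambda>i. case i of 0 \<Rightarrow> Inr G | Suc j \<Rightarrow> Inl j) 0 0 A"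

definition inst_args :: "trm list \<Rightarrow> ty \<Rightarrow> ty" where
  "inst_args ts E = fsubst (\<lambda>j. if j < length ts then ts ! j else Var (j - length ts)) E"

definition subst_free :: "nat \<Rightarrow> trm \<Rightarrow> ty \<Rightarrow> ty" where
  "subst_free y v B = fsubst ((\<lambda>j. Var j)(y := v)) B"

text \<open>Unfolding D[\<mu>C x D<z>/C(z)] (before instantiating x by t), and D[E/C(x)].\<close>

definition mu_unfold :: "nat \<Rightarrow> ty \<Rightarrow> ty" where
  "mu_unfold n D = psubst (\<lambda>i. case i of
        0 \<Rightarrow> Inr (Mu n (fsubst (\<lambda>j. if j < n then Var j else Var (j + 2 * n)) D) (map Var [0..<n]))
      | Suc j \<Rightarrow> Inl j) 0 0 D"

definition mu_repl :: "nat \<Rightarrow> ty \<Rightarrow> ty \<Rightarrow> ty" where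
  "mu_repl n D E = psubst (\<lambda>i. case i of
        0 \<Rightarrow> Inr (fsubst (\<lambda>j. if j < n then Var j else Var (j + n)) E)
      | Suc j \<Rightarrow> Inl j) 0 0 D"

primrec poccurs :: "nat \<Rightarrow> ty \<Rightarrow> bool" where
  "poccurs i Bot = False"
| "poccurs i (PVar X ts) = (X = i)"
| "poccurs i (PSym c ts) = False"
| "poccurs i (Arr A B) = (poccurs i A \<or> poccurs i B)"
| "poccurs i (AllT A) = poccurs i A"
| "poccurs i (AllP A) = poccurs (Suc i) A"
| "poccurs i (Mu n D ts) = poccurs (Suc i) D"

fun positive :: "nat \<Rightarrow> ty \<Rightarrow> bool" and negative :: "nat \<Rightarrow> ty \<Rightarrow> bool" where
  "positive i Bot = True"
| "positive i (PVar X ts) = True"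
| "positive i (PSym c ts) = True"
| "positive i (Arr A B) = (negative i A \<and> positive i B)"
| "positive i (AllT A) = positive i A"
| "positive i (AllP A) = positive (Suc i) A"
| "positive i (Mu n D ts) = positive (Suc i) D"
| "negative i Bot = True"
| "negative i (PVar X ts) = (X \<noteq> i)"
| "negative i (PSym c ts) = True"
| "negative i (Arr A B) = (positive i A \<and> negative i B)"
| "negative i (AllT A) = negative i A"
| "negative i (AllP A) = negative (Suc i) A"
| "negative i (Mu n D ts) = negative (Suc i) D"

primrec wf_ty :: "ty \<Rightarrow> bool" where
  "wf_ty Bot = True"
| "wf_ty (PVar X ts) = True"
| "wf_ty (PSym c ts) = True"
| "wf_ty (Arr A B) = (wf_ty A \<and> wf_ty B)"
| "wf_ty (AllT A) = wf_ty A"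
| "wf_ty (AllP A) = wf_ty A"
| "wf_ty (Mu n D ts) = (length ts = n \<and> poccurs 0 D \<and> positive 0 D \<and> wf_ty D)"

definition eq_instance :: "(trm \<times> trm) set \<Rightarrow> trm \<Rightarrow> trm \<Rightarrow> bool" where
  "eq_instance Eq v w \<longleftrightarrow> (\<exists>l r \<sigma>. (l, r) \<in> Eq \<and> v = tsubst \<sigma> l \<and> w = tsubst \<sigma> r)"

inductive subtype :: "(trm \<times> trm) set \<Rightarrow> ty \<Rightarrow> ty \<Rightarrow> bool" for Eq where
  refl: "wf_ty A \<Longrightarrow> subtype Eq A A"
| arr: "subtype Eq A A' \<Longrightarrow> subtype Eq B B' \<Longrightarrow> subtype Eq (Arr A' B) (Arr A B')"
| allT_l: "wf_ty (AllT A) \<Longrightarrow> subtype Eq (inst_t t A) B \<Longrightarrow> subtype Eq (AllT A) B"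
| allP_l: "wf_ty (AllP A) \<Longrightarrow> wf_ty G \<Longrightarrow> subtype Eq (inst_p G A) B \<Longrightarrow> subtype Eq (AllP A) B"
| allT_r: "wf_ty A \<Longrightarrow> wf_ty B \<Longrightarrow> subtype Eq (fsubst (\<lambda>j. Var (Suc j)) A) B \<Longrightarrow> subtype Eq A (AllT B)"
| allP_r: "wf_ty A \<Longrightarrow> wf_ty B \<Longrightarrow> subtype Eq (prename Suc A) B \<Longrightarrow> subtype Eq A (AllP B)"
| eqn: "wf_ty B \<Longrightarrow> eq_instance Eq v w \<Longrightarrow> subtype Eq A (subst_free y v B) \<Longrightarrow>
          subtype Eq A (subst_free y w B)"
| trans: "subtype Eq A B \<Longrightarrow> subtype Eq B C \<Longrightarrow> subtype Eq A C"
| fold: "wf_ty (Mu n D ts) \<Longrightarrow> subtype Eq (inst_args ts (mu_unfold n D)) (Mu n D ts)"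
| unfold: "wf_ty (Mu n D ts) \<Longrightarrow> subtype Eq (Mu n D ts) (inst_args ts (mu_unfold n D))"
| ind: "wf_ty (Mu n D ts) \<Longrightarrow> wf_ty E \<Longrightarrow> subtype Eq (mu_repl n D E) E \<Longrightarrow>
          subtype Eq (Mu n D ts) (inst_args ts E)"

primrec arrow_type :: "ty \<Rightarrow> bool" where
  "arrow_type Bot = False"
| "arrow_type (PVar X ts) = False"
| "arrow_type (PSym c ts) = False"
| "arrow_type (Arr A B) = True"
| "arrow_type (AllT A) = arrow_type A"
| "arrow_type (AllP A) = arrow_type A"
| "arrow_type (Mu n D ts) = arrow_type D"

end

theory Submission
  imports Defs
begin

text \<open>Every subtyping rule relates the two sides by substitutions, and substitution
never destroys an arrow.  Arrows can be created only by substituting an arrow type,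
which happens in the fold rule: there the substituted abstraction is the \<mu>-type itself,
whose body already contains the arrow, so the conclusion is again an arrow type.\<close>

lemma arrow_type_fsubst [simp]: "arrow_type (fsubst \<sigma> A) = arrow_type A"
  by (induction A arbitrary: \<sigma>) auto

lemma arrow_type_prename [simp]: "arrow_type (prename f A) = arrow_type A"
  by (induction A arbitrary: f) auto

lemma arrow_type_psubst: "arrow_type A \<Longrightarrow> arrow_type (psubst \<rho> k d A)"
  by (induction A arbitrary: k d) auto

lemma arrow_type_psubstD:
  "arrow_type (psubst \<rho> k d A) \<Longrightarrow> arrow_type A \<or> (\<exists>i G. \<rho> i = Inr G \<and> arrow_type G)"
  by (induction A arbitrary: k d) (auto split: if_splits sum.splits)

lemma arrow_type_inst_t [simp]: "arrow_type (inst_t t A) = arrow_type A"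
  by (simp add: inst_t_def)

lemma arrow_type_inst_args [simp]: "arrow_type (inst_args ts A) = arrow_type A"
  by (simp add: inst_args_def)

lemma arrow_type_subst_free [simp]: "arrow_type (subst_free y v A) = arrow_type A"
  by (simp add: subst_free_def)

lemma arrow_type_inst_p: "arrow_type A \<Longrightarrow> arrow_type (inst_p G A)"
  by (simp add: inst_p_def arrow_type_psubst)

lemma arrow_type_mu_unfold [simp]: "arrow_type (mu_unfold n D) = arrow_type D"
proof
  assume "arrow_type (mu_unfold n D)"
  then show "arrow_type D"
    unfolding mu_unfold_def by (auto dest!: arrow_type_psubstD split: nat.splits)
qed (simp add: mu_unfold_def arrow_type_psubst)

lemma arrow_type_mu_repl: "arrow_type D \<Longrightarrow> arrow_type (mu_repl n D E)"
  by (simp add: mu_repl_def arrow_type_psubst)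

theorem lemma4p5:
  fixes Eq :: "(trm \<times> trm) set" and A B :: ty
  assumes "subtype Eq A B" and "arrow_type A"
  shows "arrow_type B"
  using assms
proof (induction rule: subtype.induct)
  case (allP_l A G B)
  then show ?case by (simp add: arrow_type_inst_p)
next
  case (ind n D ts E)
  then show ?case by (simp add: arrow_type_mu_repl)
qed auto

end
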